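(* Let $1<p<\infty$, $q=\max\bigl(p,\tfrac{p}{p-1}\bigr)$ and $\delta=\frac{1}{2q}$. For $n\ge 1$ let \[ \mathcal{Z}(2n)=\{e^{2\pi i j/(2n+1)}\}_{j=0}^{n}\cup\{e^{-2\pi i (j-2\delta)/(2n+1)}\}_{j=1}^{n}=\{z_{(2n)k}\}_{k=0}^{2n}, \] and let $F_{2n}(z)=\prod_{k=0}^{2n}\bigl(1-\tfrac{2n}{2n+1}\overline{z_{(2n)k}}\,z\bigr)$. Let $I=\{e^{it}:0<t<\pi\}$ (so $|I|=\pi$). Then \[ \Bigl(\frac{1}{|I|}\int_{I}|F_{2n}(e^{i\theta})|^{p}\,d\theta\Bigr)^{1/p}\Bigl(\frac{1}{|I|}\int_{I}|F_{2n}(e^{i\theta})|^{-p/(p-1)}\,d\theta\Bigr)^{(p-1)/p}\longrightarrow\infty \quad (n\to\infty); \] in particular the weights $|F_{2n}|^p$ do not satisfy a uniform Muckenhoupt $(A_p)$ condition. (Each point of $\mathcal{Z}(2n)$, suitably indexed, satisfies $|\arg(z\,\overline{e^{2\pi i\delta/(2n+1)}\omega_{(2n)k}})|\le\frac{2\pi\delta}{2n+1}$, i.e. $\mathcal{Z}(2n)$ is an angular perturbation of size $\delta$ of the rotated $(2n+1)$th roots of unity.)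
   Context: $\omega_{mk}=e^{2\pi i k/(m+1)}$ denote the $(m+1)$th roots of unity. A family of nonnegative functions $w_n$ on the unit circle satisfies a uniform $(A_p)$ condition if there is $K$ with $\bigl(\frac{1}{|I|}\int_I w_n\bigr)^{1/p}\bigl(\frac{1}{|I|}\int_I w_n^{-1/(p-1)}\bigr)^{(p-1)/p}\le K$ for all subarcs $I$ and all $n$ (here applied with $w_n=|F_{2n}|^p$). *)

theory Defs
  imports "HOL-Analysis.Analysis"
begin

definition pert_delta :: "real \<Rightarrow> real" where
  "pert_delta p = 1 / (2 * max p (p / (p - 1)))"

definition Zpt :: "real \<Rightarrow> nat \<Rightarrow> nat \<Rightarrow> complex" where
  "Zpt p n k = (if k \<le> n then cis (2 * pi * real k / (2 * real n + 1))
                else cis (- 2 * pi * (real (k - n) - 2 * pert_delta p) / (2 * real n + 1)))"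

definition Fpoly :: "real \<Rightarrow> nat \<Rightarrow> complex \<Rightarrow> complex" where
  "Fpoly p n z = (\<Prod>k\<in>{0..2*n}.
      1 - complex_of_real (2 * real n / (2 * real n + 1)) * cnj (Zpt p n k) * z)"

definition Ap_quot :: "real \<Rightarrow> nat \<Rightarrow> real" where
  "Ap_quot p n =
     ((1 / pi) * (LBINT t=0..pi. cmod (Fpoly p n (cis t)) powr p)) powr (1 / p) *
     ((1 / pi) * (LBINT t=0..pi. cmod (Fpoly p n (cis t)) powr (- p / (p - 1)))) powr ((p - 1) / p)"

end

theory Submission
  imports Defs "HOL-Computational_Algebra.Polynomial" "HOL-Real_Asymp.Real_Asymp"
begin

(* Write N = 2n+1, h = 2 pi/N, r = 1 - 1/N, e = sigma h with sigma = 2 delta = 1/q, and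
   logk r x = ln |1 - r e^(ix)|. F_2n is a product of N factors 1 - r conj(z_k) z, where the z_k
   are the N-th roots of unity with n of them rotated by e. Completing the rotated ones to a full
   set of roots of unity (whose product is 1 - w^N) gives ln |F(e^(it))| = O(1) + defect(t), where the defect is a sum of n+1 differences
   logk(t - k h) - logk(t - k h - e). Because logk is concave away from its pole, each difference
   is comparable to sigma times a one-step increment of logk; telescoping yields
     ln |F| >= -C - sigma ln (pi - t + 9/N)  on [pi/2, pi],
     ln |F| <=  C + sigma ln (t + 9/N)       on [0, pi/2].
   Raising to the power p, resp. -p/(p-1), one of the two exponents times sigma equals 1, so the
   corresponding mean over the arc grows like ln N while the other stays bounded below; hence the
   A_p quotient grows like (ln N)^sigma. *)

(* The
   polynomials prod_k (X - w conj(omega_k)) and X^N - w^N are monic of degree N with the same N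
   distinct roots, hence equal; evaluate at X = 1. *)
lemma prod_one_minus_roots_of_unity:
  fixes w :: complex and N :: nat
  assumes N: "N > 0"
  shows "(\<Prod>k<N. 1 - w * cnj (cis (2*pi*real k/real N))) = 1 - w ^ N"
proof (cases "w = 0")
  case True then show ?thesis using N by simp
next
  case False
  define z where "z = (\<lambda>k::nat. w * cnj (cis (2*pi*real k/real N)))"
  define P where "P = (\<Prod>k<N. [:- z k, 1:])"
  define Q where "Q = monom (1::complex) N - [:w ^ N:]"
  have inj: "inj_on (\<lambda>k. cis (2 * pi * real k / real N)) {..<N}"
    using Complex.bij_betw_roots_unity[OF N] by (auto simp: bij_betw_def)
  have inj_z: "inj_on z {..<N}"
    using inj False unfolding z_def inj_on_def by (metis complex_cnj_cnj mult_cancel_left)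
  have z_pow: "z k ^ N = w ^ N" for k
  proof -
    have e: "real N * (2 * pi * real k / real N) = 2 * pi * real k" using N by simp
    have "cis (2 * pi * real k / real N) ^ N = cis (2 * pi * real k)"
      by (subst Complex.DeMoivre) (simp only: e)
    also have "\<dots> = 1"
      using cos_int_2pin[of "int k"] sin_int_2pin[of "int k"] by (simp add: complex_eq_iff)
    finally show ?thesis unfolding z_def
      by (metis complex_cnj_one complex_cnj_power mult_1_right power_mult_distrib)
  qed
  have deg_P: "degree P = N" unfolding P_def
    by (subst degree_prod_eq_sum_degree) auto
  have lc_P: "lead_coeff P = 1" unfolding P_def
    by (subst lead_coeff_prod) auto
  have "P = Q"
  proof (rule poly_eqI_degree_lead_coeff[where n = N and A = "z ` {..<N}"])
    show "coeff P N = coeff Q N"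
      using lc_P deg_P N by (cases N) (simp_all add: Q_def)
    show "N \<le> card (z ` {..<N})" using inj_z by (simp add: card_image)
    show "degree P \<le> N" using deg_P by simp
    show "degree Q \<le> N" unfolding Q_def by (intro degree_diff_le) (auto simp: degree_monom_le)
    fix x assume "x \<in> z ` {..<N}"
    then obtain k where "k < N" "x = z k" by auto
    then show "poly P x = poly Q x" using z_pow by (auto simp: P_def Q_def poly_prod poly_monom)
  qed
  hence "poly P 1 = poly Q 1" by simp
  thus ?thesis by (simp add: P_def Q_def poly_prod poly_monom z_def)
qed

(* The log kernel: logk r x = ln |1 - r e^(ix)|, written explicitly so that it can be
   differentiated and estimated as a real function of x. *)
definition logk :: "real \<Rightarrow> real \<Rightarrow> real" where
  "logk r x = ln (1 - 2 * r * cos x + r\<^sup>2) / 2"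

lemma logk_quadratic_lower:
  fixes r x :: real
  assumes "0 \<le> r"
  shows "(1 - r)\<^sup>2 \<le> 1 - 2 * r * cos x + r\<^sup>2"
proof -
  have "r * cos x \<le> r" using assms cos_le_one[of x] mult_left_le by blast
  thus ?thesis by (simp add: power2_eq_square algebra_simps)
qed

lemma logk_quadratic_pos:
  fixes r x :: real
  assumes "0 \<le> r" "r < 1"
  shows "0 < 1 - 2 * r * cos x + r\<^sup>2"
  using logk_quadratic_lower[OF assms(1), of x] assms by (smt (verit) zero_less_power)

lemma norm_factor_squared:
  "(cmod (1 - complex_of_real r * cis x))\<^sup>2 = 1 - 2 * r * cos x + r\<^sup>2"
proof -
  have "(cmod (1 - complex_of_real r * cis x))\<^sup>2 = (1 - r * cos x)\<^sup>2 + (r * sin x)\<^sup>2"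
    by (simp add: cmod_power2 cis.ctr)
  also have "\<dots> = 1 - 2 * r * cos x + r\<^sup>2 * ((sin x)\<^sup>2 + (cos x)\<^sup>2)"
    by algebra
  finally show ?thesis by simp
qed

lemma factor_nonzero:
  assumes "0 \<le> r" "r < 1"
  shows "1 - complex_of_real r * cis x \<noteq> 0"
proof -
  have "cmod (complex_of_real r * cis x) < 1" using assms by (simp add: norm_mult)
  thus ?thesis by auto
qed

lemma ln_norm_factor:
  assumes "0 \<le> r" "r < 1"
  shows "ln (cmod (1 - complex_of_real r * cis x)) = logk r x"
proof -
  have "cmod (1 - complex_of_real r * cis x) = sqrt (1 - 2 * r * cos x + r\<^sup>2)"
    by (metis norm_factor_squared norm_ge_zero real_sqrt_abs real_sqrt_unique)
  thus ?thesis unfolding logk_def using logk_quadratic_pos[OF assms, of x] by (simp add: ln_sqrt)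
qed

lemma ln_norm_prod_factors:
  assumes "0 \<le> r" "r < 1" "finite A"
  shows "ln (cmod (\<Prod>k\<in>A. 1 - complex_of_real r * cis (f k))) = (\<Sum>k\<in>A. logk r (f k))"
proof -
  have "ln (cmod (\<Prod>k\<in>A. 1 - complex_of_real r * cis (f k)))
        = ln (\<Prod>k\<in>A. cmod (1 - complex_of_real r * cis (f k)))"
    by (simp only: prod_norm)
  also have "\<dots> = (\<Sum>k\<in>A. ln (cmod (1 - complex_of_real r * cis (f k))))"
    using factor_nonzero[OF assms(1,2)] by (intro ln_prod[OF assms(3)]) auto
  finally show ?thesis by (simp add: ln_norm_factor[OF assms(1,2)])
qed

lemma logk_periodic: "logk r (x - 2 * pi) = logk r x"
  by (simp add: logk_def cos_diff)

lemma logk_even: "logk r (- x) = logk r x"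
  by (simp add: logk_def)

(* Summing the kernel over a full set of rotated roots of unity collapses to a single factor:
   this is how the unperturbed half of the product telescopes against the perturbed half. *)
lemma sum_logk_roots_of_unity:
  assumes r: "0 \<le> r" "r < 1" and N: "N > 0"
  shows "(\<Sum>k<N. logk r (x - real k * (2 * pi / real N)))
           = ln (cmod (1 - complex_of_real (r ^ N) * cis (real N * x)))"
proof -
  have factor: "complex_of_real r * cis x * cnj (cis (2 * pi * real k / real N))
              = complex_of_real r * cis (x - real k * (2 * pi / real N))" for k
    by (simp add: cis_cnj mult.assoc cis_mult algebra_simps)
  have power: "(complex_of_real r * cis x) ^ N = complex_of_real (r ^ N) * cis (real N * x)"
    by (simp add: power_mult_distrib Complex.DeMoivre)
  have "(\<Sum>k<N. logk r (x - real k * (2 * pi / real N)))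
        = ln (cmod (\<Prod>k<N. 1 - complex_of_real r * cis (x - real k * (2 * pi / real N))))"
    by (rule ln_norm_prod_factors[OF r, symmetric]) simp
  also have "(\<Prod>k<N. 1 - complex_of_real r * cis (x - real k * (2 * pi / real N)))
        = 1 - (complex_of_real r * cis x) ^ N"
    using prod_one_minus_roots_of_unity[OF N, of "complex_of_real r * cis x"] by (simp only: factor)
  finally show ?thesis by (simp only: power)
qed

lemma logk_lower:
  assumes "0 \<le> r" "r < 1"
  shows "ln (1 - r) \<le> logk r x"
proof -
  have "ln ((1 - r)\<^sup>2) \<le> ln (1 - 2 * r * cos x + r\<^sup>2)"
    using logk_quadratic_lower[OF assms(1), of x] logk_quadratic_pos[OF assms, of x] assms
    by (subst ln_le_cancel_iff) auto
  moreover have "ln ((1 - r)\<^sup>2) = 2 * ln (1 - r)" using assms by (simp add: ln_realpow)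
  ultimately show ?thesis unfolding logk_def by simp
qed

lemma one_minus_cos_le: "1 - cos x \<le> (x::real)\<^sup>2 / 2"
proof -
  have "1 - cos x = 2 * (sin (x / 2))\<^sup>2"
    using cos_double_sin[of "x / 2"] by simp
  also have "(sin (x / 2))\<^sup>2 \<le> (x / 2)\<^sup>2"
    using abs_sin_x_le_abs_x[of "x / 2"] by (metis abs_le_square_iff)
  finally show ?thesis by (simp add: power2_eq_square)
qed

lemma logk_upper:
  assumes "0 \<le> r" "r < 1"
  shows "logk r x \<le> ln ((1 - r) + \<bar>x\<bar>)"
proof -
  have "1 - 2 * r * cos x + r\<^sup>2 = (1 - r)\<^sup>2 + 2 * r * (1 - cos x)"
    by (simp add: power2_eq_square algebra_simps)
  also have "\<dots> \<le> (1 - r)\<^sup>2 + x\<^sup>2"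
    using assms one_minus_cos_le[of x] cos_le_one[of x]
      mult_mono[of "2 * r" 2 "1 - cos x" "x\<^sup>2 / 2"] by simp
  also have "\<dots> \<le> ((1 - r) + \<bar>x\<bar>)\<^sup>2"
    using assms mult_left_le_one_le[of "\<bar>x\<bar>" r] by (simp add: power2_eq_square algebra_simps)
  finally have "ln (1 - 2 * r * cos x + r\<^sup>2) \<le> ln (((1 - r) + \<bar>x\<bar>)\<^sup>2)"
    using logk_quadratic_pos[OF assms, of x] by (subst ln_le_cancel_iff) auto
  also have "\<dots> = 2 * ln ((1 - r) + \<bar>x\<bar>)" using assms by (subst ln_realpow) auto
  finally show ?thesis unfolding logk_def by simp
qed

lemma logk_increment_le:
  assumes "0 \<le> r" "r < 1"
  shows "logk r x - logk r y \<le> ln (1 + \<bar>x\<bar> / (1 - r))"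
proof -
  have "logk r x - logk r y \<le> ln ((1 - r) + \<bar>x\<bar>) - ln (1 - r)"
    using logk_upper[OF assms, of x] logk_lower[OF assms, of y] by simp
  also have "\<dots> = ln (((1 - r) + \<bar>x\<bar>) / (1 - r))"
    using assms by (simp add: ln_div add_pos_nonneg)
  also have "((1 - r) + \<bar>x\<bar>) / (1 - r) = 1 + \<bar>x\<bar> / (1 - r)"
    using assms by (simp add: field_simps)
  finally show ?thesis .
qed

lemma logk_nonneg:
  assumes "0 \<le> r" "cos x \<le> 0"
  shows "0 \<le> logk r x"
proof -
  have "0 \<le> - 2 * r * cos x" using assms by (simp add: mult_nonneg_nonpos)
  then have "1 \<le> 1 - 2 * r * cos x + r\<^sup>2" using zero_le_power2[of r] by linarith
  thus ?thesis unfolding logk_def by simp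
qed

(* Away from the pole x = 0 the kernel is concave: its second derivative has the sign of
   (1 + r^2) cos x - 2 r, which is <= 0 as soon as cos x <= 1 - (1 - r)^2. *)
lemma logk_has_derivative:
  assumes "0 \<le> r" "r < 1"
  shows "(logk r has_real_derivative r * sin x / (1 - 2 * r * cos x + r\<^sup>2)) (at x)"
  unfolding logk_def[abs_def] using logk_quadratic_pos[OF assms, of x]
  by (auto intro!: derivative_eq_intros simp: field_simps)

lemma logk_has_second_derivative:
  assumes "0 \<le> r" "r < 1"
  shows "((\<lambda>x. r * sin x / (1 - 2 * r * cos x + r\<^sup>2)) has_real_derivative
           r * ((1 + r\<^sup>2) * cos x - 2 * r) / (1 - 2 * r * cos x + r\<^sup>2)\<^sup>2) (at x)"
proof -
  have "r * cos x * (1 - 2 * r * cos x + r\<^sup>2) - r * sin x * (2 * r * sin x)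
          = r * ((1 + r\<^sup>2) * cos x - 2 * r)"
    using sin_squared_eq[of x] by algebra
  thus ?thesis using logk_quadratic_pos[OF assms, of x]
    by (auto intro!: derivative_eq_intros simp: power2_eq_square mult_ac)
qed

lemma logk_concave:
  assumes r: "0 \<le> r" "r < 1" and \<beta>: "0 \<le> \<beta>" "\<beta> \<le> pi" "cos \<beta> \<le> 1 - (1 - r)\<^sup>2"
  shows "concave_on {\<beta>..2 * pi - \<beta>} (logk r)"
proof (rule f''_le0_imp_concave)
  show "convex {\<beta>..2 * pi - \<beta>}" by (rule convex_real_interval)
  fix x assume x: "x \<in> {\<beta>..2 * pi - \<beta>}"
  show "(logk r has_real_derivative r * sin x / (1 - 2 * r * cos x + r\<^sup>2)) (at x)"
    by (rule logk_has_derivative[OF r])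
  show "((\<lambda>x. r * sin x / (1 - 2 * r * cos x + r\<^sup>2)) has_real_derivative
           r * ((1 + r\<^sup>2) * cos x - 2 * r) / (1 - 2 * r * cos x + r\<^sup>2)\<^sup>2) (at x)"
    by (rule logk_has_second_derivative[OF r])
  have cos_x: "cos x \<le> cos \<beta>"
  proof (cases "x \<le> pi")
    case True thus ?thesis using x \<beta> by (intro cos_monotone_0_pi_le) auto
  next
    case False
    have "cos x = cos (2 * pi - x)" by (simp add: cos_diff)
    also have "\<dots> \<le> cos \<beta>" using x \<beta> False by (intro cos_monotone_0_pi_le) auto
    finally show ?thesis .
  qed
  have "(1 + r\<^sup>2) * cos x \<le> 2 * r"
  proof (cases "cos x \<le> 0")
    case True
    then have "(1 + r\<^sup>2) * cos x \<le> 0" by (simp add: mult_nonneg_nonpos)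
    thus ?thesis using r by simp
  next
    case False
    have "(1 + r\<^sup>2) * cos x \<le> (1 + r\<^sup>2) * (1 - (1 - r)\<^sup>2)"
      using cos_x \<beta>(3) by (intro mult_left_mono) auto
    also have "\<dots> \<le> 2 * r"
      using zero_le_power2[of "r * (r - 1)"] by (simp add: power2_eq_square algebra_simps)
    finally show ?thesis .
  qed
  then show "r * ((1 + r\<^sup>2) * cos x - 2 * r) / (1 - 2 * r * cos x + r\<^sup>2)\<^sup>2 \<le> 0"
    using r by (simp add: mult_nonneg_nonpos divide_nonpos_nonneg)
qed

definition npts :: "nat \<Rightarrow> real" where "npts n = 2 * real n + 1"

definition step :: "nat \<Rightarrow> real" where "step n = 2 * pi / npts n"

definition radius :: "nat \<Rightarrow> real" where "radius n = 2 * real n / npts n"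

definition pert_sigma :: "real \<Rightarrow> real" where "pert_sigma p = 2 * pert_delta p"

definition shift :: "real \<Rightarrow> nat \<Rightarrow> real" where "shift p n = pert_sigma p * step n"

lemma npts_pos: "0 < npts n"
  by (simp add: npts_def)

lemma step_pos: "0 < step n"
  using npts_pos[of n] by (simp add: step_def)

lemma npts_step: "npts n * step n = 2 * pi"
  using npts_pos[of n] by (simp add: step_def)

lemma radius_bounds: "0 \<le> radius n" "radius n < 1"
  by (auto simp: radius_def npts_def field_simps)

lemma one_minus_radius: "1 - radius n = 1 / npts n"
  using npts_pos[of n] by (simp add: radius_def npts_def field_simps)

lemma pert_sigma_eq: "pert_sigma p = 1 / max p (p / (p - 1))"
  by (simp add: pert_sigma_def pert_delta_def)

(* Since q = max(p, p/(p-1)) >= 2, the relative shift sigma lies in (0, 1/2]. *)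
lemma pert_sigma_bounds:
  assumes "1 < p"
  shows "0 < pert_sigma p" "pert_sigma p \<le> 1 / 2"
proof -
  have "2 \<le> max p (p / (p - 1))"
  proof (cases "2 \<le> p")
    case False
    then have "2 \<le> p / (p - 1)" using assms by (simp add: field_simps)
    then show ?thesis by simp
  qed simp
  then show "0 < pert_sigma p" "pert_sigma p \<le> 1 / 2" by (simp_all add: pert_sigma_eq field_simps)
qed

lemma Fpoly_split:
  "Fpoly p n (cis t) =
     (\<Prod>k\<in>{0..n}. 1 - complex_of_real (radius n) * cis (t - real k * step n)) *
     (\<Prod>j\<in>{1..n}. 1 - complex_of_real (radius n) * cis (t + real j * step n - shift p n))"
proof -
  define factor where
    "factor k = 1 - complex_of_real (radius n) * cnj (Zpt p n k) * cis t" for k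
  have "Fpoly p n (cis t) = prod factor {0..n} * prod factor {n+1..2*n}"
  proof -
    have "{0..2*n} = {0..n} \<union> {n+1..2*n}" by auto
    then show ?thesis unfolding Fpoly_def factor_def radius_def npts_def
      by (simp add: prod.union_disjoint)
  qed
  also have "prod factor {0..n}
      = (\<Prod>k\<in>{0..n}. 1 - complex_of_real (radius n) * cis (t - real k * step n))"
  proof (rule prod.cong[OF refl])
    fix k assume "k \<in> {0..n}"
    then have "cnj (Zpt p n k) * cis t = cis (t - real k * step n)"
      by (simp add: Zpt_def cis_cnj cis_mult step_def npts_def mult.commute)
    then show "factor k = 1 - complex_of_real (radius n) * cis (t - real k * step n)"
      by (simp add: factor_def mult.assoc)
  qed
  also have "prod factor {n+1..2*n} = (\<Prod>j\<in>{1..n}. factor (j + n))"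
    using prod.shift_bounds_cl_nat_ivl[of factor 1 n n] by (simp add: mult_2)
  also have "\<dots> = (\<Prod>j\<in>{1..n}. 1 - complex_of_real (radius n) * cis (t + real j * step n - shift p n))"
  proof (rule prod.cong[OF refl])
    fix j assume "j \<in> {1..n}"
    then have "cnj (Zpt p n (j + n)) * cis t
               = cis (t + 2 * pi * (real j - 2 * pert_delta p) / (2 * real n + 1))"
      by (simp add: Zpt_def cis_cnj cis_mult) (simp add: field_simps)
    also have "2 * pi * (real j - 2 * pert_delta p) / (2 * real n + 1) = real j * step n - shift p n"
      unfolding step_def shift_def pert_sigma_def npts_def by (simp add: diff_divide_distrib algebra_simps)
    finally show "factor (j + n)
        = 1 - complex_of_real (radius n) * cis (t + real j * step n - shift p n)"
      by (simp add: factor_def mult.assoc add_diff_eq)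
  qed
  finally show ?thesis .
qed

lemma Fpoly_nonzero: "Fpoly p n (cis t) \<noteq> 0"
  unfolding Fpoly_split using factor_nonzero[OF radius_bounds] by (simp add: prod_zero_iff)

(* By 2 pi-periodicity, the angles x + j h (j = 1..n) are the angles x - k h (k = n+1..2n). *)
lemma sum_logk_reflect:
  "(\<Sum>j\<in>{1..n}. logk r (x + real j * step n)) = (\<Sum>k\<in>{n+1..2*n}. logk r (x - real k * step n))"
proof -
  have "(\<Sum>k\<in>{n+1..2*n}. logk r (x - real k * step n)) = (\<Sum>j\<in>{1..n}. logk r (x - real (j + n) * step n))"
    using sum.shift_bounds_cl_nat_ivl[of "\<lambda>k. logk r (x - real k * step n)" 1 n n] by (simp add: mult_2)
  also have "\<dots> = (\<Sum>j\<in>{1..n}. logk r (x - real (n + 1 - j + n) * step n))"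
    using sum.atLeastAtMost_rev[of "\<lambda>j. logk r (x - real (j + n) * step n)" 1 n] by (simp add: add.commute)
  also have "\<dots> = (\<Sum>j\<in>{1..n}. logk r (x + real j * step n))"
  proof (rule sum.cong[OF refl])
    fix j assume j: "j \<in> {1..n}"
    have "real (n + 1 - j + n) = npts n - real j" using j by (simp add: npts_def of_nat_diff)
    then have "x - real (n + 1 - j + n) * step n = (x + real j * step n) - 2 * pi"
      using npts_step[of n] by (simp add: left_diff_distrib)
    then show "logk r (x - real (n + 1 - j + n) * step n) = logk r (x + real j * step n)"
      by (simp only: logk_periodic)
  qed
  finally show ?thesis by simp
qed

(* Completing the perturbed
   half to a full set of roots of unity gives
     ln |F(e^(it))| = ln |1 - r^N e^(iN(t - e))| + defect p n t,
   and the first term is harmless (r^N <= 1/2), so everything rests on estimating the defect. *)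
definition defect :: "real \<Rightarrow> nat \<Rightarrow> real \<Rightarrow> real" where
  "defect p n t = (\<Sum>k\<in>{0..n}. logk (radius n) (t - real k * step n)
                               - logk (radius n) (t - shift p n - real k * step n))"

lemma ln_norm_Fpoly:
  "ln (cmod (Fpoly p n (cis t))) =
     ln (cmod (1 - complex_of_real (radius n ^ (2*n+1)) * cis (npts n * (t - shift p n))))
     + defect p n t"
proof -
  define x where "x = t - shift p n"
  define L where "L = logk (radius n)"
  have "ln (cmod (Fpoly p n (cis t)))
        = (\<Sum>k\<in>{0..n}. L (t - real k * step n)) + (\<Sum>j\<in>{1..n}. L (t + real j * step n - shift p n))"
    unfolding Fpoly_split norm_mult L_def
    using Fpoly_nonzero[of p n t] unfolding Fpoly_split
    by (simp add: ln_mult ln_norm_prod_factors[OF radius_bounds, symmetric])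
  also have "(\<Sum>j\<in>{1..n}. L (t + real j * step n - shift p n)) = (\<Sum>j\<in>{1..n}. L (x + real j * step n))"
    by (simp add: x_def algebra_simps)
  also have "(\<Sum>j\<in>{1..n}. L (x + real j * step n)) = (\<Sum>k\<in>{n+1..2*n}. L (x - real k * step n))"
    unfolding L_def by (rule sum_logk_reflect)
  also have "\<dots> = (\<Sum>k<2*n+1. L (x - real k * step n)) - (\<Sum>k\<in>{0..n}. L (x - real k * step n))"
  proof -
    have "{..<2*n+1} = {0..n} \<union> {n+1..2*n}" by auto
    then show ?thesis by (simp add: sum.union_disjoint)
  qed
  also have "(\<Sum>k<2*n+1. L (x - real k * step n))
             = ln (cmod (1 - complex_of_real (radius n ^ (2*n+1)) * cis (npts n * x)))"
  proof -
    have "real (2*n+1) = npts n" by (simp add: npts_def)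
    then show ?thesis
      using sum_logk_roots_of_unity[OF radius_bounds, where N = "2*n+1" and x = x] unfolding L_def step_def by simp
  qed
  finally show ?thesis by (simp add: defect_def L_def x_def sum_subtractf algebra_simps)
qed

definition edge :: "nat \<Rightarrow> real" where "edge n = 3 / npts n"

lemma sin_ge_half:
  assumes "0 \<le> (y::real)" "y \<le> 1"
  shows "y / 2 \<le> sin y"
proof (cases "y = 0")
  case False
  then have "0 < y" using assms by linarith
  from MVT2[OF this, of sin cos] obtain z where z: "0 < z" "z < y" "sin y - sin 0 = (y - 0) * cos z"
    by (auto intro: DERIV_sin)
  have "cos (pi / 3) \<le> cos z" using z assms pi_gt3 by (intro cos_monotone_0_pi_le) auto
  then have "1 / 2 \<le> cos z" by (simp add: cos_60)
  then show ?thesis using z \<open>0 < y\<close> mult_left_mono[of "1 / 2" "cos z" y] by simp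
qed simp

lemma cos_edge_le:
  assumes "1 \<le> n"
  shows "cos (edge n) \<le> 1 - (1 - radius n)\<^sup>2"
proof -
  define N where "N = npts n"
  have N: "3 \<le> N" using assms by (simp add: N_def npts_def)
  have "cos (3 / N) = 1 - 2 * (sin (3 / N / 2))\<^sup>2"
    using cos_double_sin[of "3 / N / 2"] by simp
  also have "\<dots> \<le> 1 - 2 * (3 / N / 2 / 2)\<^sup>2"
    using sin_ge_half[of "3 / N / 2"] N by (simp add: power_mono)
  also have "\<dots> \<le> 1 - (1 / N)\<^sup>2"
    using N by (simp add: power2_eq_square field_simps)
  finally show ?thesis by (simp add: edge_def one_minus_radius N_def)
qed

lemma logk_radius_concave:
  assumes "1 \<le> n"
  shows "concave_on {edge n..2 * pi - edge n} (logk (radius n))"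
proof (rule logk_concave[OF radius_bounds _ _ cos_edge_le[OF assms]])
  have "edge n \<le> 1" using assms by (simp add: edge_def npts_def)
  then show "edge n \<le> pi" using pi_gt3 by linarith
qed (simp add: edge_def npts_def)

lemma concave_chord:
  fixes f :: "real \<Rightarrow> real"
  assumes f: "concave_on C f" and C: "x \<in> C" "z \<in> C" and xyz: "x < y" "y < z"
  shows "(y - x) * (f z - f y) \<le> (z - y) * (f y - f x)"
proof -
  have cv: "convex_on C (\<lambda>x. - f x)" using f by (simp add: concave_on_def)
  have "((- f x) - (- f y)) / (x - y) \<le> ((- f y) - (- f z)) / (y - z)"
    using convex_on_slope_le[OF cv C xyz] by linarith
  moreover have "((- f x) - (- f y)) / (x - y) = - ((f y - f x) / (y - x))"
    "((- f y) - (- f z)) / (y - z) = - ((f z - f y) / (z - y))"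
    by (metis minus_diff_eq divide_minus_right diff_minus_eq_add add.commute diff_conv_add_uminus)+
  ultimately have "(f z - f y) / (z - y) \<le> (f y - f x) / (y - x)" by linarith
  then have "(y - x) * (z - y) * ((f z - f y) / (z - y)) \<le> (y - x) * (z - y) * ((f y - f x) / (y - x))"
    using xyz by (intro mult_left_mono) auto
  thus ?thesis using xyz by simp
qed

context
  fixes f :: "real \<Rightarrow> real" and a b e h :: real
  assumes concave: "concave_on {a..b} f" and even: "\<And>x. f (- x) = f x"
    and e: "0 < e" and h: "0 < h"
begin

lemma increment_lower_right:
  assumes "a \<le> \<phi> - e" "\<phi> + h \<le> b"
  shows "e * (f (\<phi> + h) - f \<phi>) \<le> h * (f \<phi> - f (\<phi> - e))"
  using concave_chord[OF concave, of "\<phi> - e" "\<phi> + h" \<phi>] assms e h by simp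

lemma increment_lower_left:
  assumes "a \<le> - \<phi> - h" "- \<phi> + e \<le> b"
  shows "e * (f (\<phi> + h) - f \<phi>) \<le> h * (f \<phi> - f (\<phi> - e))"
  using concave_chord[OF concave, of "- \<phi> - h" "- \<phi> + e" "- \<phi>"] assms e h
    even[of "\<phi> + h"] even[of "\<phi> - e"] even[of \<phi>] by (simp add: algebra_simps)

lemma increment_upper_right:
  assumes "a \<le> \<phi> - e - h" "\<phi> \<le> b"
  shows "h * (f \<phi> - f (\<phi> - e)) \<le> e * (f (\<phi> - e) - f (\<phi> - e - h))"
  using concave_chord[OF concave, of "\<phi> - e - h" \<phi> "\<phi> - e"] assms e h by simp

lemma increment_upper_left:
  assumes "a \<le> - \<phi>" "- \<phi> + e + h \<le> b"
  shows "h * (f \<phi> - f (\<phi> - e)) \<le> e * (f (\<phi> - e) - f (\<phi> - e - h))"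
  using concave_chord[OF concave, of "- \<phi>" "- \<phi> + e + h" "- \<phi> + e"] assms e h
    even[of \<phi>] even[of "\<phi> - e"] even[of "\<phi> - e - h"] by (simp add: algebra_simps)

end

(* Added to the potentials below, it pays for the finitely many terms near the
   pole, where concavity is not available. *)
definition ramp :: "real \<Rightarrow> real \<Rightarrow> real \<Rightarrow> real" where
  "ramp a h x = max 0 (min 5 ((x - a) / h + 1))"

lemma ramp_mono: "0 < h \<Longrightarrow> x \<le> y \<Longrightarrow> ramp a h x \<le> ramp a h y"
  unfolding ramp_def by (intro max.mono min.mono) (auto simp: divide_right_mono)

lemma ramp_bounds: "0 \<le> ramp a h x" "ramp a h x \<le> 5"
  unfolding ramp_def by auto

lemma ramp_step:
  assumes "0 < h" "a < x" "x < a + 3 * h"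
  shows "1 \<le> ramp a h (x + h) - ramp a h x"
proof -
  have "0 < (x - a) / h" "(x - a) / h < 3" using assms by (simp_all add: field_simps)
  moreover have "(x + h - a) / h = (x - a) / h + 1" using assms by (simp add: field_simps)
  ultimately show ?thesis unfolding ramp_def by simp
qed

definition crude_bound :: real where "crude_bound = ln (1 + 6 * pi)"

lemma crude_bound_nonneg: "0 \<le> crude_bound"
  unfolding crude_bound_def using pi_gt_zero by simp

lemma logk_radius_increment_le:
  assumes "\<bar>x\<bar> \<le> 3 * step n"
  shows "logk (radius n) x - logk (radius n) y \<le> crude_bound"
proof -
  have "logk (radius n) x - logk (radius n) y \<le> ln (1 + \<bar>x\<bar> * npts n)"
    using logk_increment_le[OF radius_bounds, of n x y] by (simp add: one_minus_radius)
  also have "\<dots> \<le> crude_bound"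
  proof -
    have "\<bar>x\<bar> * npts n \<le> 3 * step n * npts n"
      using assms npts_pos[of n] by (intro mult_right_mono) auto
    then have "\<bar>x\<bar> * npts n \<le> 6 * pi" using npts_step[of n] by (simp add: mult.commute)
    then show ?thesis unfolding crude_bound_def
      using npts_pos[of n] by (subst ln_le_cancel_iff) (auto intro: add_pos_nonneg)
  qed
  finally show ?thesis .
qed

(* Upper bounds for the kernel at radius 1 - 1/N: logk x <= ln (1/N + |x|). The offset 9/N
   absorbs the term 1/N together with one grid step h <= 8/N. *)
lemma logk_radius_upper:
  assumes "\<bar>x\<bar> \<le> y"
  shows "logk (radius n) x \<le> ln (1 / npts n + y)"
proof -
  have "logk (radius n) x \<le> ln (1 / npts n + \<bar>x\<bar>)"
    using logk_upper[OF radius_bounds, of n x] by (simp add: one_minus_radius)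
  also have "\<dots> \<le> ln (1 / npts n + y)"
    using assms npts_pos[of n] by (subst ln_le_cancel_iff) (auto intro: add_pos_nonneg)
  finally show ?thesis .
qed

definition offset :: "nat \<Rightarrow> real" where "offset n = 9 / npts n"

lemma logk_radius_upper_offset:
  assumes "\<bar>x\<bar> \<le> y + step n"
  shows "logk (radius n) x \<le> ln (y + offset n)"
proof -
  have "step n \<le> 8 / npts n"
    using npts_pos[of n] pi_less_4 by (simp add: step_def divide_right_mono)
  then have "logk (radius n) x \<le> ln (1 / npts n + (y + 8 / npts n))"
    using assms by (intro logk_radius_upper) linarith
  also have "1 / npts n + (y + 8 / npts n) = y + offset n"
    by (simp add: offset_def add_divide_distrib[symmetric])
  finally show ?thesis .
qed

lemma scaled_le_bound:
  fixes s X K :: real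
  assumes "0 < s" "s \<le> 1" "0 \<le> K" "X \<le> K"
  shows "s * X \<le> K"
proof (cases "0 \<le> X")
  case True
  then have "s * X \<le> X" using assms by (simp add: mult_left_le_one_le)
  then show ?thesis using assms by linarith
next
  case False
  then have "s * X \<le> 0" using assms by (simp add: mult_pos_neg less_imp_le)
  then show ?thesis using assms by linarith
qed

(* Each term of the defect dominates (resp. is dominated by) a
   one-step increment of the lower (resp. upper) potential. *)
definition lower_potential :: "real \<Rightarrow> nat \<Rightarrow> real \<Rightarrow> real" where
  "lower_potential p n x =
     pert_sigma p * logk (radius n) x - 2 * crude_bound * ramp (- (step n + edge n)) (step n) x"

definition upper_potential :: "real \<Rightarrow> nat \<Rightarrow> real \<Rightarrow> real" where
  "upper_potential p n x =
     pert_sigma p * logk (radius n) x + 2 * crude_bound * ramp (- (edge n + shift p n + step n)) (step n) x"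

context
  fixes p :: real and n :: nat
  assumes p: "1 < p" and n: "2 \<le> n"
begin

lemma shift_pos: "0 < shift p n"
  using pert_sigma_bounds[OF p] step_pos[of n] by (simp add: shift_def)

lemma shift_le: "shift p n \<le> step n / 2"
  using pert_sigma_bounds[OF p] step_pos[of n] by (simp add: shift_def mult_right_le_one_le)

lemma edge_pos: "0 < edge n"
  using npts_pos[of n] by (simp add: edge_def)

lemma edge_le: "edge n \<le> step n / 2"
  using npts_pos[of n] pi_gt3 by (simp add: edge_def step_def field_simps)

lemma step_le: "2 * step n \<le> pi"
proof -
  have "5 \<le> npts n" using n by (simp add: npts_def)
  then have "4 * pi \<le> npts n * pi" by (intro mult_right_mono) auto
  then show ?thesis using npts_pos[of n] by (simp add: step_def field_simps)
qed

lemma n_step: "real n * step n = pi - step n / 2"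
proof -
  have "real n * step n = (npts n * step n - step n) / 2" by (simp add: npts_def algebra_simps)
  then show ?thesis by (simp add: npts_step)
qed

lemmas parameter_bounds = step_pos[of n] shift_pos shift_le edge_pos edge_le step_le

lemma scale_by_step:
  "shift p n * X \<le> step n * Y \<Longrightarrow> pert_sigma p * X \<le> Y"
  "step n * X \<le> shift p n * Y \<Longrightarrow> X \<le> pert_sigma p * Y"
  using step_pos[of n] by (simp_all add: shift_def mult_ac)

lemma kernel_concave: "concave_on {edge n..2 * pi - edge n} (logk (radius n))"
  using logk_radius_concave n by simp

lemma chord_increment_lower:
  assumes "- (pi / 2) \<le> \<phi>" "\<phi> \<le> pi"
    and far: "edge n + shift p n \<le> \<phi> \<or> \<phi> \<le> - (step n + edge n)"
  shows "pert_sigma p * (logk (radius n) (\<phi> + step n) - logk (radius n) \<phi>)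
           \<le> logk (radius n) \<phi> - logk (radius n) (\<phi> - shift p n)"
proof (rule scale_by_step(1))
  from far show "shift p n * (logk (radius n) (\<phi> + step n) - logk (radius n) \<phi>)
                   \<le> step n * (logk (radius n) \<phi> - logk (radius n) (\<phi> - shift p n))"
  proof
    assume "edge n + shift p n \<le> \<phi>"
    then show ?thesis using assms parameter_bounds
      by (intro increment_lower_right[OF kernel_concave logk_even shift_pos step_pos]) auto
  next
    assume "\<phi> \<le> - (step n + edge n)"
    then show ?thesis using assms parameter_bounds
      by (intro increment_lower_left[OF kernel_concave logk_even shift_pos step_pos]) auto
  qed
qed

lemma chord_increment_upper:
  assumes "- pi \<le> \<phi>" "\<phi> \<le> pi / 2"
    and far: "edge n + shift p n + step n \<le> \<phi> \<or> \<phi> \<le> - edge n"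
  shows "logk (radius n) \<phi> - logk (radius n) (\<phi> - shift p n)
           \<le> pert_sigma p * (logk (radius n) (\<phi> - shift p n) - logk (radius n) (\<phi> - shift p n - step n))"
proof (rule scale_by_step(2))
  from far show "step n * (logk (radius n) \<phi> - logk (radius n) (\<phi> - shift p n))
      \<le> shift p n * (logk (radius n) (\<phi> - shift p n) - logk (radius n) (\<phi> - shift p n - step n))"
  proof
    assume "edge n + shift p n + step n \<le> \<phi>"
    then show ?thesis using assms parameter_bounds
      by (intro increment_upper_right[OF kernel_concave logk_even shift_pos step_pos]) auto
  next
    assume "\<phi> \<le> - edge n"
    then show ?thesis using assms parameter_bounds
      by (intro increment_upper_left[OF kernel_concave logk_even shift_pos step_pos]) auto
  qed
qed

(* Away from the pole this is the chord
   comparison; near the pole the ramp increment pays for the crude bound. *)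
lemma lower_potential_increment:
  assumes "- (pi / 2) \<le> \<phi>" "\<phi> \<le> pi"
  shows "lower_potential p n (\<phi> + step n) - lower_potential p n \<phi>
           \<le> logk (radius n) \<phi> - logk (radius n) (\<phi> - shift p n)"
proof -
  define L where "L = logk (radius n)"
  define K where "K = crude_bound"
  define \<rho> where "\<rho> = ramp (- (step n + edge n)) (step n)"
  have potential: "lower_potential p n (\<phi> + step n) - lower_potential p n \<phi>
      = pert_sigma p * (L (\<phi> + step n) - L \<phi>) - 2 * K * (\<rho> (\<phi> + step n) - \<rho> \<phi>)"
    unfolding lower_potential_def L_def K_def \<rho>_def by (simp add: algebra_simps)
  have "\<rho> \<phi> \<le> \<rho> (\<phi> + step n)" unfolding \<rho>_def using step_pos[of n] by (intro ramp_mono) auto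
  then have ramp_nonneg: "0 \<le> 2 * K * (\<rho> (\<phi> + step n) - \<rho> \<phi>)"
    using crude_bound_nonneg by (simp add: K_def)
  consider (far) "edge n + shift p n \<le> \<phi> \<or> \<phi> \<le> - (step n + edge n)"
    | (near) "- (step n + edge n) < \<phi>" "\<phi> < edge n + shift p n" by linarith
  then show ?thesis
  proof cases
    case far
    then show ?thesis using chord_increment_lower[OF assms] potential ramp_nonneg
      unfolding L_def by linarith
  next
    case near
    have "L (\<phi> - shift p n) - L \<phi> \<le> K"
      unfolding L_def K_def using near parameter_bounds by (intro logk_radius_increment_le) auto
    moreover have "pert_sigma p * (L (\<phi> + step n) - L \<phi>) \<le> K"
      unfolding L_def K_def using near parameter_bounds pert_sigma_bounds[OF p] crude_bound_nonneg
      by (intro scaled_le_bound logk_radius_increment_le) auto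
    moreover have "1 \<le> \<rho> (\<phi> + step n) - \<rho> \<phi>"
      unfolding \<rho>_def using near parameter_bounds by (intro ramp_step) auto
    then have "2 * K \<le> 2 * K * (\<rho> (\<phi> + step n) - \<rho> \<phi>)"
      using crude_bound_nonneg mult_left_mono[of 1 _ "2 * K"] by (simp add: K_def)
    ultimately show ?thesis using potential by (simp add: L_def)
  qed
qed

lemma upper_potential_increment:
  assumes "- pi \<le> \<phi>" "\<phi> \<le> pi / 2"
  shows "logk (radius n) \<phi> - logk (radius n) (\<phi> - shift p n)
           \<le> upper_potential p n (\<phi> - shift p n) - upper_potential p n (\<phi> - shift p n - step n)"
proof -
  define L where "L = logk (radius n)"
  define K where "K = crude_bound"
  define \<rho> where "\<rho> = ramp (- (edge n + shift p n + step n)) (step n)"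
  define \<psi> where "\<psi> = \<phi> - shift p n - step n"
  have potential: "upper_potential p n (\<phi> - shift p n) - upper_potential p n \<psi>
      = pert_sigma p * (L (\<phi> - shift p n) - L \<psi>) + 2 * K * (\<rho> (\<psi> + step n) - \<rho> \<psi>)"
    unfolding upper_potential_def L_def K_def \<rho>_def \<psi>_def by (simp add: algebra_simps)
  have "\<rho> \<psi> \<le> \<rho> (\<psi> + step n)" unfolding \<rho>_def using step_pos[of n] by (intro ramp_mono) auto
  then have ramp_nonneg: "0 \<le> 2 * K * (\<rho> (\<psi> + step n) - \<rho> \<psi>)"
    using crude_bound_nonneg by (simp add: K_def)
  consider (far) "edge n + shift p n + step n \<le> \<phi> \<or> \<phi> \<le> - edge n"
    | (near) "- edge n < \<phi>" "\<phi> < edge n + shift p n + step n" by linarith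
  then show ?thesis
  proof cases
    case far
    then show ?thesis using chord_increment_upper[OF assms] potential ramp_nonneg
      unfolding L_def \<psi>_def by linarith
  next
    case near
    have "L \<phi> - L (\<phi> - shift p n) \<le> K"
      unfolding L_def K_def using near parameter_bounds by (intro logk_radius_increment_le) auto
    moreover have "pert_sigma p * (L \<psi> - L (\<phi> - shift p n)) \<le> K"
      unfolding L_def K_def \<psi>_def using near parameter_bounds pert_sigma_bounds[OF p] crude_bound_nonneg
      by (intro scaled_le_bound logk_radius_increment_le) auto
    moreover have "1 \<le> \<rho> (\<psi> + step n) - \<rho> \<psi>"
      unfolding \<rho>_def \<psi>_def using near parameter_bounds by (intro ramp_step) auto
    then have "2 * K \<le> 2 * K * (\<rho> (\<psi> + step n) - \<rho> \<psi>)"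
      using crude_bound_nonneg mult_left_mono[of 1 _ "2 * K"] by (simp add: K_def)
    ultimately show ?thesis using potential unfolding \<psi>_def by (simp add: L_def algebra_simps)
  qed
qed

(* The endpoint terms are controlled by logk >= 0 where cos <= 0 and by the upper kernel bound. *)
lemma defect_lower:
  assumes t: "pi / 2 \<le> t" "t \<le> pi"
  shows "- 10 * crude_bound - pert_sigma p * ln (pi - t + offset n) \<le> defect p n t"
proof -
  define f where "f i = lower_potential p n (t + step n - real i * step n)" for i :: nat
  have "(\<Sum>k\<le>n. f k - f (Suc k)) \<le> defect p n t"
    unfolding defect_def atLeast0AtMost
  proof (rule sum_mono)
    fix k assume "k \<in> {..n}"
    then have "real k * step n \<le> real n * step n"
      using step_pos[of n] by (intro mult_right_mono) auto
    moreover have "0 \<le> real k * step n" using step_pos[of n] by simp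
    ultimately have "- (pi / 2) \<le> t - real k * step n" "t - real k * step n \<le> pi"
      using t n_step step_pos[of n] by linarith+
    from lower_potential_increment[OF this]
    have "f k - f (Suc k) \<le> logk (radius n) (t - real k * step n)
                                 - logk (radius n) (t - real k * step n - shift p n)"
      by (simp add: f_def algebra_simps)
    then show "f k - f (Suc k) \<le> logk (radius n) (t - real k * step n)
                                 - logk (radius n) (t - shift p n - real k * step n)"
      by (simp add: algebra_simps)
  qed
  moreover have "(\<Sum>k\<le>n. f k - f (Suc k)) = f 0 - f (Suc n)" by (rule sum_telescope)
  moreover have "- 10 * crude_bound \<le> f 0"
  proof -
    have "cos (t + step n) \<le> 0"
      using t step_le step_pos[of n] cos_ge_zero[of "t + step n - pi"] by simp
    then have "0 \<le> pert_sigma p * logk (radius n) (t + step n)"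
      using pert_sigma_bounds(1)[OF p] by (simp add: logk_nonneg radius_bounds)
    moreover have "2 * crude_bound * ramp (- (step n + edge n)) (step n) (t + step n) \<le> 2 * crude_bound * 5"
      using crude_bound_nonneg by (intro mult_left_mono ramp_bounds) auto
    ultimately show ?thesis by (simp add: f_def lower_potential_def)
  qed
  moreover have "f (Suc n) \<le> pert_sigma p * ln (pi - t + offset n)"
  proof -
    define x where "x = t - (pi - step n / 2)"
    have "t + step n - real (Suc n) * step n = x"
      using n_step by (simp add: x_def algebra_simps)
    then have "f (Suc n) = lower_potential p n x" by (simp only: f_def)
    also have "\<dots> \<le> pert_sigma p * logk (radius n) x"
      using crude_bound_nonneg ramp_bounds(1) by (simp add: lower_potential_def)
    also have "\<dots> \<le> pert_sigma p * ln (pi - t + offset n)"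
      using t step_pos[of n] pert_sigma_bounds(1)[OF p] unfolding x_def
      by (intro mult_left_mono logk_radius_upper_offset) auto
    finally show ?thesis .
  qed
  ultimately show ?thesis by linarith
qed

lemma defect_upper:
  assumes t: "0 \<le> t" "t \<le> pi / 2"
  shows "defect p n t \<le> 10 * crude_bound + pert_sigma p * ln (t + offset n)"
proof -
  define f where "f i = upper_potential p n (t - shift p n - real i * step n)" for i :: nat
  have "defect p n t \<le> (\<Sum>k\<le>n. f k - f (Suc k))"
    unfolding defect_def atLeast0AtMost
  proof (rule sum_mono)
    fix k assume "k \<in> {..n}"
    then have "real k * step n \<le> real n * step n"
      using step_pos[of n] by (intro mult_right_mono) auto
    moreover have "0 \<le> real k * step n" using step_pos[of n] by simp
    ultimately have "- pi \<le> t - real k * step n" "t - real k * step n \<le> pi / 2"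
      using t n_step step_pos[of n] by linarith+
    from upper_potential_increment[OF this]
    show "logk (radius n) (t - real k * step n) - logk (radius n) (t - shift p n - real k * step n)
            \<le> f k - f (Suc k)"
      by (simp add: f_def algebra_simps)
  qed
  moreover have "(\<Sum>k\<le>n. f k - f (Suc k)) = f 0 - f (Suc n)" by (rule sum_telescope)
  moreover have "f 0 \<le> 10 * crude_bound + pert_sigma p * ln (t + offset n)"
  proof -
    have "pert_sigma p * logk (radius n) (t - shift p n) \<le> pert_sigma p * ln (t + offset n)"
      using t parameter_bounds pert_sigma_bounds(1)[OF p]
      by (intro mult_left_mono logk_radius_upper_offset) auto
    moreover have "2 * crude_bound * ramp (- (edge n + shift p n + step n)) (step n) (t - shift p n)
                   \<le> 2 * crude_bound * 5"
      using crude_bound_nonneg by (intro mult_left_mono ramp_bounds) auto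
    ultimately show ?thesis by (simp add: f_def upper_potential_def)
  qed
  moreover have "0 \<le> f (Suc n)"
  proof -
    define x where "x = t - shift p n - real (Suc n) * step n"
    have "x = - (pi + (step n / 2 + shift p n - t))"
      using n_step by (simp add: x_def algebra_simps)
    then have "cos x = - cos (step n / 2 + shift p n - t)" by (simp only: cos_minus cos_periodic_pi2)
    moreover have "0 \<le> cos (step n / 2 + shift p n - t)"
      using t parameter_bounds by (intro cos_ge_zero) auto
    ultimately have "cos x \<le> 0" by simp
    then have "0 \<le> pert_sigma p * logk (radius n) x"
      using pert_sigma_bounds(1)[OF p] by (simp add: logk_nonneg radius_bounds)
    moreover have "0 \<le> crude_bound * ramp (- (edge n + shift p n + step n)) (step n) x"
      using crude_bound_nonneg ramp_bounds(1) by simp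
    ultimately show ?thesis by (simp add: f_def x_def upper_potential_def)
  qed
  ultimately show ?thesis by linarith
qed

end

(* The boundary term: r^N = (1 - 1/N)^N <= 1/e <= 1/2, so |ln |1 - r^N e^(is)|| <= ln 2. *)
lemma radius_power_le: "radius n ^ (2*n+1) \<le> 1 / 2"
proof -
  have "radius n \<le> exp (- 1 / npts n)"
    using exp_ge_add_one_self[of "- 1 / npts n"] one_minus_radius[of n] by simp
  then have "radius n ^ (2*n+1) \<le> exp (- 1 / npts n) ^ (2*n+1)"
    using radius_bounds(1) by (intro power_mono) auto
  also have "\<dots> = exp (real (2*n+1) * (- 1 / npts n))" by (rule exp_of_nat_mult[symmetric])
  also have "real (2*n+1) * (- 1 / npts n) = - 1" using npts_pos[of n] by (simp add: npts_def)
  also have "exp (- 1 :: real) \<le> 1 / 2"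
    using exp_ge_add_one_self[of 1] by (simp add: exp_minus field_simps)
  finally show ?thesis .
qed

lemma ln_norm_one_minus_small:
  assumes "0 \<le> c" "c \<le> 1 / 2"
  shows "\<bar>ln (cmod (1 - complex_of_real c * cis x))\<bar> \<le> ln 2"
proof -
  have norm: "cmod (complex_of_real c * cis x) = c" using assms by (simp add: norm_mult)
  define y where "y = cmod (1 - complex_of_real c * cis x)"
  have "1 / 2 \<le> y"
    using norm_triangle_ineq2[of 1 "complex_of_real c * cis x"] norm assms by (simp add: y_def)
  moreover have "y \<le> 2"
    using norm_triangle_ineq4[of 1 "complex_of_real c * cis x"] norm assms by (simp add: y_def)
  ultimately have "ln (1 / 2) \<le> ln y" "ln y \<le> ln 2" by (subst ln_le_cancel_iff; simp)+
  then show ?thesis by (simp add: y_def abs_le_iff ln_div)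
qed

definition log_F_bound :: real where "log_F_bound = ln 2 + 10 * crude_bound"

lemma norm_Fpoly_powr: "cmod (Fpoly p n (cis t)) powr a = exp (a * ln (cmod (Fpoly p n (cis t))))"
  using Fpoly_nonzero[of p n t] by (simp add: powr_def)

lemma Fpoly_powr_continuous: "continuous_on S (\<lambda>t. cmod (Fpoly p n (cis t)) powr a)"
proof -
  have "continuous_on S (\<lambda>t. cmod (Fpoly p n (cis t)))"
    unfolding Fpoly_def by (intro continuous_intros)
  then show ?thesis using Fpoly_nonzero by (intro continuous_on_powr continuous_on_const) auto
qed

lemma LBINT_Fpoly_powr:
  "(LBINT t=0..pi. cmod (Fpoly p n (cis t)) powr a) = integral {0..pi} (\<lambda>t. cmod (Fpoly p n (cis t)) powr a)"
  using interval_integral_eq_integral[of 0 pi "\<lambda>t. cmod (Fpoly p n (cis t)) powr a"]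
  by (auto simp: zero_ereal_def intro!: borel_integrable_atLeastAtMost' Fpoly_powr_continuous)

lemma LBINT_Fpoly_powr_lower:
  assumes "0 \<le> c" "d \<le> pi" "c \<le> d" and g: "g integrable_on {c..d}"
    and below: "\<And>t. t \<in> {c..d} \<Longrightarrow> g t \<le> cmod (Fpoly p n (cis t)) powr a"
  shows "integral {c..d} g \<le> (LBINT t=0..pi. cmod (Fpoly p n (cis t)) powr a)"
proof -
  have "integral {c..d} g \<le> integral {c..d} (\<lambda>t. cmod (Fpoly p n (cis t)) powr a)"
    using below by (intro integral_le[OF g] integrable_continuous_interval Fpoly_powr_continuous)
  also have "\<dots> \<le> integral {0..pi} (\<lambda>t. cmod (Fpoly p n (cis t)) powr a)"
    using assms by (intro integral_subset_le integrable_continuous_interval Fpoly_powr_continuous) auto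
  finally show ?thesis by (simp only: LBINT_Fpoly_powr)
qed

lemma powr_ge_quarter:
  fixes y b :: real
  assumes "0 < y" "y \<le> 4" "0 \<le> b" "b \<le> 1"
  shows "1 / 4 \<le> y powr (- b)"
proof (cases "y \<le> 1")
  case True
  then have "y powr b \<le> 1" using assms powr_mono2[of b y 1] by simp
  then show ?thesis using assms by (simp add: powr_minus divide_simps)
next
  case False
  then have "y powr b \<le> y powr 1" using assms by (intro powr_mono) auto
  then have "y powr b \<le> 4" using assms by simp
  then show ?thesis using assms by (simp add: powr_minus divide_simps)
qed

lemma integral_inverse_left:
  assumes "0 < A"
  shows "integral {0..pi/2} (\<lambda>t. 1 / (t + A)) = ln (pi/2 + A) - ln A"
proof -
  have "((\<lambda>t. 1 / (t + A)) has_integral (ln (pi/2 + A) - ln (0 + A))) {0..pi/2}"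
  proof (rule fundamental_theorem_of_calculus)
    fix x assume "x \<in> {0..pi/2}"
    then have "((\<lambda>t. ln (t + A)) has_real_derivative 1 / (x + A)) (at x)"
      using assms by (auto intro!: derivative_eq_intros)
    then show "((\<lambda>t. ln (t + A)) has_vector_derivative 1 / (x + A)) (at x within {0..pi/2})"
      by (simp add: has_real_derivative_iff_has_vector_derivative has_vector_derivative_at_within)
  qed simp
  then show ?thesis by (simp add: integral_unique)
qed

lemma integral_inverse_right:
  assumes "0 < A"
  shows "integral {pi/2..pi} (\<lambda>t. 1 / (pi - t + A)) = ln (pi/2 + A) - ln A"
proof -
  have "((\<lambda>t. 1 / (pi - t + A)) has_integral (- ln (pi - pi + A) - - ln (pi - pi/2 + A))) {pi/2..pi}"
  proof (rule fundamental_theorem_of_calculus)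
    fix x assume "x \<in> {pi/2..pi}"
    then have "((\<lambda>t. - ln (pi - t + A)) has_real_derivative 1 / (pi - x + A)) (at x)"
      using assms by (auto intro!: derivative_eq_intros)
    then show "((\<lambda>t. - ln (pi - t + A)) has_vector_derivative 1 / (pi - x + A)) (at x within {pi/2..pi})"
      by (simp add: has_real_derivative_iff_has_vector_derivative has_vector_derivative_at_within)
  qed simp
  then show ?thesis by (simp add: integral_unique)
qed

definition log_growth :: "nat \<Rightarrow> real" where "log_growth n = ln (1 + pi * npts n / 18)"

lemma log_growth_eq: "ln (pi/2 + offset n) - ln (offset n) = log_growth n"
proof -
  have "(pi/2 + offset n) / (offset n) = 1 + pi * npts n / 18"
    using npts_pos[of n] by (simp add: offset_def field_simps)
  moreover have "0 < offset n" "0 < pi/2 + offset n"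
    using npts_pos[of n] pi_gt_zero by (auto simp: offset_def intro: add_pos_pos)
  then have "ln (pi/2 + offset n) - ln (offset n) = ln ((pi/2 + offset n) / (offset n))"
    by (intro ln_divide_pos[symmetric])
  ultimately show ?thesis unfolding log_growth_def by metis
qed

lemma log_growth_nonneg: "0 \<le> log_growth n"
  using npts_pos[of n] pi_gt_zero by (simp add: log_growth_def)

lemma powr_product_lower:
  fixes X Y M K a b :: real
  assumes "0 < a" "1 \<le> b" "0 \<le> M"
    and X: "exp (- (a * K)) * M \<le> X" and Y: "exp (- (b * K)) / 8 \<le> Y"
  shows "exp (- 2 * K) / 8 * M powr (1 / a) \<le> X powr (1 / a) * Y powr (1 / b)"
proof -
  have "exp (- K) * M powr (1 / a) = (exp (- (a * K)) * M) powr (1 / a)"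
    using assms by (simp add: powr_mult exp_powr_real)
  also have "\<dots> \<le> X powr (1 / a)" using assms by (intro powr_mono2) auto
  finally have X_pow: "exp (- K) * M powr (1 / a) \<le> X powr (1 / a)" .
  have "exp (- K) / 8 \<le> exp (- K) * (1 / 8) powr (1 / b)"
    using powr_mono'[of "1 / b" 1 "1 / 8"] assms by (simp add: divide_simps)
  also have "\<dots> = (exp (- (b * K)) / 8) powr (1 / b)"
    using assms by (simp add: powr_mult exp_powr_real powr_divide)
  also have "\<dots> \<le> Y powr (1 / b)" using assms by (intro powr_mono2) auto
  finally have Y_pow: "exp (- K) / 8 \<le> Y powr (1 / b)" .
  have "exp (- 2 * K) / 8 * M powr (1 / a) = (exp (- K) * M powr (1 / a)) * (exp (- K) / 8)"
    by (simp add: exp_add[symmetric])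
  also have "\<dots> \<le> X powr (1 / a) * Y powr (1 / b)"
    using X_pow Y_pow by (intro mult_mono) auto
  finally show ?thesis .
qed

context
  fixes p :: real and n :: nat
  assumes p: "1 < p" and n: "2 \<le> n"
begin

lemma ln_norm_Fpoly_lower:
  assumes "pi / 2 \<le> t" "t \<le> pi"
  shows "- log_F_bound - pert_sigma p * ln (pi - t + offset n) \<le> ln (cmod (Fpoly p n (cis t)))"
  using ln_norm_Fpoly[of p n t] defect_lower[OF p n assms]
    ln_norm_one_minus_small[OF _ radius_power_le, of n "npts n * (t - shift p n)"] radius_bounds(1)[of n]
  by (simp add: log_F_bound_def abs_le_iff)

lemma ln_norm_Fpoly_upper:
  assumes "0 \<le> t" "t \<le> pi / 2"
  shows "ln (cmod (Fpoly p n (cis t))) \<le> log_F_bound + pert_sigma p * ln (t + offset n)"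
  using ln_norm_Fpoly[of p n t] defect_upper[OF p n assms]
    ln_norm_one_minus_small[OF _ radius_power_le, of n "npts n * (t - shift p n)"] radius_bounds(1)[of n]
  by (simp add: log_F_bound_def abs_le_iff)

(* For n >= 2 the distance to the singularity stays within range of powr_ge_quarter. *)
lemma offset_bounds: "0 < offset n" "pi/2 + offset n \<le> 4"
proof -
  have "5 \<le> npts n" using n by (simp add: npts_def)
  then have "offset n \<le> 9 / 5" by (simp add: offset_def field_simps)
  then show "pi/2 + offset n \<le> 4" using pi_less_4 by simp
qed (use npts_pos[of n] in \<open>simp add: offset_def\<close>)

lemma Fpoly_powr_lower_right:
  assumes "0 < a" "t \<in> {pi/2..pi}"
  shows "exp (- (a * log_F_bound)) * (pi - t + offset n) powr (- (a * pert_sigma p))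
           \<le> cmod (Fpoly p n (cis t)) powr a"
proof -
  define y where "y = pi - t + offset n"
  have y: "0 < y" using assms offset_bounds unfolding y_def by (intro add_nonneg_pos) auto
  have "a * (- log_F_bound - pert_sigma p * ln y) \<le> a * ln (cmod (Fpoly p n (cis t)))"
    using ln_norm_Fpoly_lower assms unfolding y_def by (intro mult_left_mono) auto
  then have "exp (- (a * log_F_bound) + - (a * pert_sigma p) * ln y) \<le> cmod (Fpoly p n (cis t)) powr a"
    by (simp add: norm_Fpoly_powr algebra_simps)
  moreover have "y powr (- (a * pert_sigma p)) = exp (- (a * pert_sigma p) * ln y)"
    using y by (simp add: powr_def)
  ultimately show ?thesis by (simp only: exp_add y_def)
qed

lemma Fpoly_powr_lower_left:
  assumes "0 < a" "t \<in> {0..pi/2}"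
  shows "exp (- (a * log_F_bound)) * (t + offset n) powr (- (a * pert_sigma p))
           \<le> cmod (Fpoly p n (cis t)) powr (- a)"
proof -
  define y where "y = t + offset n"
  have y: "0 < y" using assms offset_bounds unfolding y_def by (intro add_nonneg_pos) auto
  have "a * ln (cmod (Fpoly p n (cis t))) \<le> a * (log_F_bound + pert_sigma p * ln y)"
    using ln_norm_Fpoly_upper assms unfolding y_def by (intro mult_left_mono) auto
  then have "exp (- (a * log_F_bound) + - (a * pert_sigma p) * ln y) \<le> cmod (Fpoly p n (cis t)) powr (- a)"
    by (simp add: norm_Fpoly_powr algebra_simps)
  moreover have "y powr (- (a * pert_sigma p)) = exp (- (a * pert_sigma p) * ln y)"
    using y by (simp add: powr_def)
  ultimately show ?thesis by (simp only: exp_add y_def)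
qed

lemma moment_right_bounded:
  assumes "0 < a" "a * pert_sigma p \<le> 1"
  shows "exp (- (a * log_F_bound)) * (pi / 8) \<le> (LBINT t=0..pi. cmod (Fpoly p n (cis t)) powr a)"
proof -
  have "integral {pi/2..pi} (\<lambda>t. exp (- (a * log_F_bound)) / 4)
          \<le> (LBINT t=0..pi. cmod (Fpoly p n (cis t)) powr a)"
  proof (rule LBINT_Fpoly_powr_lower)
    fix t assume t: "t \<in> {pi/2..pi}"
    have "1 / 4 \<le> (pi - t + offset n) powr (- (a * pert_sigma p))"
      using t assms offset_bounds pert_sigma_bounds(1)[OF p]
      by (intro powr_ge_quarter add_nonneg_pos) auto
    then have "exp (- (a * log_F_bound)) / 4
               \<le> exp (- (a * log_F_bound)) * (pi - t + offset n) powr (- (a * pert_sigma p))"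
      by simp
    also have "\<dots> \<le> cmod (Fpoly p n (cis t)) powr a" by (rule Fpoly_powr_lower_right[OF assms(1) t])
    finally show "exp (- (a * log_F_bound)) / 4 \<le> cmod (Fpoly p n (cis t)) powr a" .
  qed auto
  then show ?thesis by (simp add: mult.commute)
qed

lemma moment_right_log:
  assumes "0 < a" "a * pert_sigma p = 1"
  shows "exp (- (a * log_F_bound)) * log_growth n \<le> (LBINT t=0..pi. cmod (Fpoly p n (cis t)) powr a)"
proof -
  define c where "c = exp (- (a * log_F_bound))"
  have "integral {pi/2..pi} (\<lambda>t. c * (1 / (pi - t + offset n)))
          \<le> (LBINT t=0..pi. cmod (Fpoly p n (cis t)) powr a)"
  proof (rule LBINT_Fpoly_powr_lower)
    show "(\<lambda>t. c * (1 / (pi - t + offset n))) integrable_on {pi/2..pi}"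
      using offset_bounds by (intro integrable_continuous_interval continuous_intros) auto
    fix t assume t: "t \<in> {pi/2..pi}"
    have "0 < pi - t + offset n" using t offset_bounds by (intro add_nonneg_pos) auto
    then show "c * (1 / (pi - t + offset n)) \<le> cmod (Fpoly p n (cis t)) powr a"
      using Fpoly_powr_lower_right[OF assms(1) t] assms(2) by (simp add: c_def powr_neg_one)
  qed auto
  moreover have "integral {pi/2..pi} (\<lambda>t. c * (1 / (pi - t + offset n))) = c * log_growth n"
    by (simp only: integral_mult_right integral_inverse_right[OF offset_bounds(1)] log_growth_eq)
  ultimately show ?thesis by (simp add: c_def)
qed

lemma moment_left_bounded:
  assumes "0 < a" "a * pert_sigma p \<le> 1"
  shows "exp (- (a * log_F_bound)) * (pi / 8) \<le> (LBINT t=0..pi. cmod (Fpoly p n (cis t)) powr (- a))"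
proof -
  have "integral {0..pi/2} (\<lambda>t. exp (- (a * log_F_bound)) / 4)
          \<le> (LBINT t=0..pi. cmod (Fpoly p n (cis t)) powr (- a))"
  proof (rule LBINT_Fpoly_powr_lower)
    fix t assume t: "t \<in> {0..pi/2}"
    have "1 / 4 \<le> (t + offset n) powr (- (a * pert_sigma p))"
      using t assms offset_bounds pert_sigma_bounds(1)[OF p]
      by (intro powr_ge_quarter add_nonneg_pos) auto
    then have "exp (- (a * log_F_bound)) / 4
               \<le> exp (- (a * log_F_bound)) * (t + offset n) powr (- (a * pert_sigma p))"
      by simp
    also have "\<dots> \<le> cmod (Fpoly p n (cis t)) powr (- a)" by (rule Fpoly_powr_lower_left[OF assms(1) t])
    finally show "exp (- (a * log_F_bound)) / 4 \<le> cmod (Fpoly p n (cis t)) powr (- a)" .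
  qed auto
  then show ?thesis by (simp add: mult.commute)
qed

lemma moment_left_log:
  assumes "0 < a" "a * pert_sigma p = 1"
  shows "exp (- (a * log_F_bound)) * log_growth n \<le> (LBINT t=0..pi. cmod (Fpoly p n (cis t)) powr (- a))"
proof -
  define c where "c = exp (- (a * log_F_bound))"
  have "integral {0..pi/2} (\<lambda>t. c * (1 / (t + offset n)))
          \<le> (LBINT t=0..pi. cmod (Fpoly p n (cis t)) powr (- a))"
  proof (rule LBINT_Fpoly_powr_lower)
    show "(\<lambda>t. c * (1 / (t + offset n))) integrable_on {0..pi/2}"
      using offset_bounds by (intro integrable_continuous_interval continuous_intros) auto
    fix t assume t: "t \<in> {0..pi/2}"
    have "0 < t + offset n" using t offset_bounds by (intro add_nonneg_pos) auto
    then show "c * (1 / (t + offset n)) \<le> cmod (Fpoly p n (cis t)) powr (- a)"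
      using Fpoly_powr_lower_left[OF assms(1) t] assms(2) by (simp add: c_def powr_neg_one)
  qed auto
  moreover have "integral {0..pi/2} (\<lambda>t. c * (1 / (t + offset n))) = c * log_growth n"
    by (simp only: integral_mult_right integral_inverse_left[OF offset_bounds(1)] log_growth_eq)
  ultimately show ?thesis by (simp add: c_def)
qed

end

(* The A_p quotient is at least a constant times (log_growth n / pi)^sigma: for p >= 2 the exponent
   p satisfies p sigma = 1 and carries the logarithm, otherwise the dual exponent p/(p-1) does. *)
lemma Ap_quot_lower:
  assumes p: "1 < p" and n: "2 \<le> n"
  shows "exp (- 2 * log_F_bound) / 8 * (log_growth n / pi) powr pert_sigma p \<le> Ap_quot p n"
proof -
  define q where "q = p / (p - 1)"
  define M where "M = log_growth n / pi"
  define X where "X = (1 / pi) * (LBINT t=0..pi. cmod (Fpoly p n (cis t)) powr p)"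
  define Y where "Y = (1 / pi) * (LBINT t=0..pi. cmod (Fpoly p n (cis t)) powr (- q))"
  have q: "1 < q" "pert_sigma p = 1 / max p q" using p by (simp_all add: q_def pert_sigma_eq)
  have Ap: "Ap_quot p n = X powr (1 / p) * Y powr (1 / q)"
    by (simp add: Ap_quot_def X_def Y_def q_def)
  have M: "0 \<le> M" using log_growth_nonneg by (simp add: M_def)
  have moments: "p * pert_sigma p \<le> 1 \<Longrightarrow> exp (- (p * log_F_bound)) / 8 \<le> X"
    "p * pert_sigma p = 1 \<Longrightarrow> exp (- (p * log_F_bound)) * M \<le> X"
    "q * pert_sigma p \<le> 1 \<Longrightarrow> exp (- (q * log_F_bound)) / 8 \<le> Y"
    "q * pert_sigma p = 1 \<Longrightarrow> exp (- (q * log_F_bound)) * M \<le> Y"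
    using moment_right_bounded[OF p n, of p] moment_right_log[OF p n, of p]
      moment_left_bounded[OF p n, of q] moment_left_log[OF p n, of q] p q
    by (auto simp: X_def Y_def M_def field_simps)
  show ?thesis
  proof (cases "q \<le> p")
    case True
    then have "pert_sigma p = 1 / p" using q by (simp add: max_def)
    then have "p * pert_sigma p = 1" "q * pert_sigma p \<le> 1" using p True by simp_all
    with powr_product_lower[of p q M log_F_bound X Y] moments p q M
    show ?thesis by (simp add: Ap M_def)
  next
    case False
    then have "pert_sigma p = 1 / q" using q by (simp add: max_def)
    then have "q * pert_sigma p = 1" "p * pert_sigma p \<le> 1" using q False by simp_all
    with powr_product_lower[of q p M log_F_bound Y X] moments p q M
    show ?thesis by (simp add: Ap M_def mult.commute)
  qed
qed

theorem mainTheorem3: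
  fixes p :: real
  assumes "1 < p"
  shows "filterlim (\<lambda>n. Ap_quot p n) at_top sequentially"
proof (rule filterlim_at_top_mono)
  define C where "C = exp (- 2 * log_F_bound) / 8"
  have "0 < C" "0 < pert_sigma p" using pert_sigma_bounds(1)[OF assms] by (simp_all add: C_def)
  then show "filterlim (\<lambda>n. C * (log_growth n / pi) powr pert_sigma p) at_top sequentially"
    unfolding log_growth_def npts_def by real_asymp
  show "\<forall>\<^sub>F n in sequentially. C * (log_growth n / pi) powr pert_sigma p \<le> Ap_quot p n"
    using eventually_ge_at_top[of 2] by eventually_elim (unfold C_def, rule Ap_quot_lower[OF assms])
qed

end
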